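(* Let $p,q,r,n$ be integers with $r\ge 0$, $q\ge 2$, $p-q=2r+1$, $n=p+q$, and suppose $q\le 2r$. Then the integrality gap of the clique-web inequality with parameters $n,p,q,r$ is at most $3$, i.e. $\mathrm{sdp}(\mathrm{CW}^r_p,-e)/\mathrm{ip}(\mathrm{CW}^r_p,-e)\le 3$.
   Context: For integers $p,r$ with $p\ge 2r+3$, the antiweb $\mathrm{AW}^r_p$ is the graph on $[p]$ with edges $\{i,i+s\}$ for $i\in[p]$, $1\le s\le r$ (indices mod $p$); the web $\mathrm{W}^r_p$ is its complement in $K_p$. With $p,q,r,n$ as in the claim, $\mathrm{CW}^r_p$ is the graph on $[n]$ consisting of a clique on $\{1,\dots,q\}$, a copy of $\mathrm{W}^r_p$ on $\{q+1,\dots,n\}$, and all edges $ij$ with $1\le i\le q<j\le n$. The clique-web inequality is $-\sum_{ij\in E(\mathrm{CW}^r_p)}x_{ij}\le q(r+1)$. For a graph $G=([n],E)$ and $w\in\mathbb{R}^E$, $\mathrm{ip}(G,w)=\max_{x\in\{\pm1\}^n}\sum_{ij\in E}w_{ij}x_ix_j$ and $\mathrm{sdp}(G,w)=\max\sum_{ij\in E}w_{ij}u_i^Tu_j$ over unit vectors $u_i\in\mathbb{R}^n$; $e$ denotes the all-ones vector in $\mathbb{R}^{E(\mathrm{CW}^r_p)}$. The integrality gap of the clique-web inequality is $\mathrm{sdp}(\mathrm{CW}^r_p,-e)/\mathrm{ip}(\mathrm{CW}^r_p,-e)$, where $\mathrm{ip}(\mathrm{CW}^r_p,-e)=q(r+1)$.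 *)

theory Defs
  imports Main "HOL-Library.FuncSet" Complex_Main
begin

text \<open>Graphs on vertex set [n] = {1..n} are given by a symmetric adjacency predicate;
  an edge ij is represented once, as the pair (i,j) with i < j.\<close>

definition edges :: "nat \<Rightarrow> (nat \<Rightarrow> nat \<Rightarrow> bool) \<Rightarrow> (nat \<times> nat) set" where
  "edges n E = {(i,j). 1 \<le> i \<and> i < j \<and> j \<le> n \<and> E i j}"

definition aw_adj :: "nat \<Rightarrow> nat \<Rightarrow> nat \<Rightarrow> nat \<Rightarrow> bool" where
  "aw_adj p r i j \<longleftrightarrow> i \<noteq> j \<and>
     (\<exists>s\<in>{1..r}. (int j - int i) mod int p = int s \<or> (int i - int j) mod int p = int s)"

definition web_adj :: "nat \<Rightarrow> nat \<Rightarrow> nat \<Rightarrow> nat \<Rightarrow> bool" where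
  "web_adj p r i j \<longleftrightarrow> i \<noteq> j \<and> \<not> aw_adj p r i j"

text \<open>CW^r_p on [n], n = p + q: clique on {1..q}, copy of W^r_p on {q+1..n}
  (vertex q+k corresponds to vertex k of W^r_p), and all edges between the two parts.\<close>
definition cw_adj :: "nat \<Rightarrow> nat \<Rightarrow> nat \<Rightarrow> nat \<Rightarrow> nat \<Rightarrow> bool" where
  "cw_adj p q r i j \<longleftrightarrow> i \<noteq> j \<and>
     ((i \<le> q \<and> j \<le> q) \<or> (i \<le> q \<and> q < j) \<or> (q < i \<and> j \<le> q) \<or>
      (q < i \<and> q < j \<and> web_adj p r (i - q) (j - q)))"

definition ip :: "nat \<Rightarrow> (nat \<Rightarrow> nat \<Rightarrow> bool) \<Rightarrow> (nat \<Rightarrow> nat \<Rightarrow> real) \<Rightarrow> real" where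
  "ip n E w = Max {(\<Sum>(i,j)\<in>edges n E. w i j * x i * x j) | x.
                    \<forall>i\<in>{1..n}. x i \<in> {-1, 1}}"

text \<open>sdp(G,w) = max over unit vectors u_1..u_n in R^n of sum_{ij in E} w_ij u_i^T u_j.
  Vectors in R^n are represented as functions on the coordinate set {1..n}.\<close>
definition sdp :: "nat \<Rightarrow> (nat \<Rightarrow> nat \<Rightarrow> bool) \<Rightarrow> (nat \<Rightarrow> nat \<Rightarrow> real) \<Rightarrow> real" where
  "sdp n E w = Sup {(\<Sum>(i,j)\<in>edges n E. w i j * (\<Sum>k=1..n. u i k * u j k)) | u.
                    \<forall>i\<in>{1..n}. (\<Sum>k=1..n. (u i k)\<^sup>2) = 1}"

end

theory Submission
  imports Defs
begin

text \<open>Giving the clique sign -1 and the web sign +1 yields a cut of value q(r+1), so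
  ip >= q(r+1). For unit vectors u_i with Gram matrix G, nonnegativity of |sum_{x<=q} u_x|^2
  bounds the clique part of the SDP objective by q/2, and nonnegativity of |u_x + u_a + u_b|^2
  for every clique vertex x and web edge ab, summed using that the web is q-regular, bounds
  the rest by 3pq/4. Since q <= 2r, q/2 + 3pq/4 <= 3q(r+1).\<close>

lemma finite_ip_values:
  fixes w :: "nat \<Rightarrow> nat \<Rightarrow> real"
  shows "finite {(\<Sum>(i,j)\<in>edges n E. w i j * x i * x j) | x. \<forall>i\<in>{1..n}. x i \<in> {-1, 1}}"
    (is "finite {?f x | x. _}")
proof (rule finite_subset)
  show "{?f x | x. \<forall>i\<in>{1..n}. x i \<in> {-1, 1}} \<subseteq> ?f ` (PiE {1..n} (\<lambda>_. {-1, 1}))"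
  proof clarify
    fix x :: "nat \<Rightarrow> real"
    assume x: "\<forall>i\<in>{1..n}. x i \<in> {-1, 1}"
    have "?f x = ?f (restrict x {1..n})"
      by (intro sum.cong refl) (auto simp: edges_def)
    moreover have "restrict x {1..n} \<in> PiE {1..n} (\<lambda>_. {-1, 1})" using x by auto
    ultimately show "?f x \<in> ?f ` (PiE {1..n} (\<lambda>_. {-1, 1}))" by blast
  qed
qed (intro finite_imageI finite_PiE; simp)

lemma ip_geI:
  fixes w :: "nat \<Rightarrow> nat \<Rightarrow> real"
  assumes "\<forall>i\<in>{1..n}. x i \<in> {-1, 1}"
  shows "(\<Sum>(i,j)\<in>edges n E. w i j * x i * x j) \<le> ip n E w"
  unfolding ip_def using assms by (intro Max_ge[OF finite_ip_values]) blast

lemma sdp_leI: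
  fixes w :: "nat \<Rightarrow> nat \<Rightarrow> real"
  assumes "1 \<le> n"
    and "\<And>u. \<forall>i\<in>{1..n}. (\<Sum>k=1..n. (u i k)\<^sup>2) = 1 \<Longrightarrow>
           (\<Sum>(i,j)\<in>edges n E. w i j * (\<Sum>k=1..n. u i k * u j k)) \<le> B"
  shows "sdp n E w \<le> B"
  unfolding sdp_def
proof (rule cSup_least)
  define e1 where "e1 = (\<lambda>(i::nat) (k::nat). if k = 1 then 1 else (0::real))"
  have "\<forall>i\<in>{1..n}. (\<Sum>k=1..n. (e1 i k)\<^sup>2) = 1"
    using assms(1) by (simp add: e1_def if_distrib[of "\<lambda>t. t\<^sup>2"] cong: if_cong)
  then show "{(\<Sum>(i,j)\<in>edges n E. w i j * (\<Sum>k=1..n. u i k * u j k)) | u.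
               \<forall>i\<in>{1..n}. (\<Sum>k=1..n. (u i k)\<^sup>2) = 1} \<noteq> {}"
    by blast
qed (use assms(2) in blast)

lemma sum_edges_eq_half_sum_adj:
  fixes g :: "nat \<Rightarrow> nat \<Rightarrow> real"
  assumes E_sym: "\<And>i j. E i j = E j i" and E_irrefl: "\<And>i. \<not> E i i"
    and g_sym: "\<And>i j. g i j = g j i"
  shows "(\<Sum>(i,j)\<in>edges n E. g i j) = (\<Sum>i=1..n. \<Sum>j=1..n. if E i j then g i j else 0) / 2"
proof -
  let ?L = "\<lambda>i j. if i < j \<and> E i j then g i j else 0"
  have split: "(if E i j then g i j else 0) = ?L i j + ?L j i" for i j
    using E_sym[of i j] g_sym[of i j] E_irrefl[of i] by (cases i j rule: linorder_cases) auto
  have upper: "(\<Sum>i=1..n. \<Sum>j=1..n. ?L i j) = (\<Sum>(i,j)\<in>edges n E. g i j)"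
  proof -
    have "(\<Sum>i=1..n. \<Sum>j=1..n. ?L i j) = (\<Sum>(i,j)\<in>{1..n}\<times>{1..n}. ?L i j)"
      by (simp add: sum.cartesian_product)
    also have "\<dots> = (\<Sum>(i,j)\<in>edges n E. ?L i j)"
      by (rule sum.mono_neutral_right) (auto simp: edges_def split: if_splits)
    also have "\<dots> = (\<Sum>(i,j)\<in>edges n E. g i j)"
      by (rule sum.cong) (auto simp: edges_def)
    finally show ?thesis .
  qed
  have "(\<Sum>i=1..n. \<Sum>j=1..n. if E i j then g i j else 0)
      = (\<Sum>i=1..n. \<Sum>j=1..n. ?L i j) + (\<Sum>i=1..n. \<Sum>j=1..n. ?L j i)"
    by (simp add: split sum.distrib)
  also have "\<dots> = 2 * (\<Sum>(i,j)\<in>edges n E. g i j)"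
    using sum.swap[of ?L "{1..n}" "{1..n}"] upper by simp
  finally show ?thesis by simp
qed

lemma sum_offdiag_eq:
  fixes g :: "'a \<Rightarrow> 'a \<Rightarrow> real"
  assumes "finite A"
  shows "(\<Sum>x\<in>A. \<Sum>y\<in>A. if x \<noteq> y then g x y else 0) = (\<Sum>x\<in>A. \<Sum>y\<in>A. g x y) - (\<Sum>x\<in>A. g x x)"
proof -
  have "(\<Sum>y\<in>A. g x y) = (\<Sum>y\<in>A. if x \<noteq> y then g x y else 0) + g x x" if "x \<in> A" for x
  proof -
    have "(\<Sum>y\<in>A. g x y) = (\<Sum>y\<in>A. (if x \<noteq> y then g x y else 0) + (if x = y then g x y else 0))"
      by (intro sum.cong) auto
    then show ?thesis using that assms by (simp add: sum.distrib)
  qed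
  then show ?thesis by (simp add: sum.distrib)
qed

lemma sum_regular_neighbours:
  fixes c :: real
  assumes "finite B" and "card {b\<in>B. W a b} = d"
  shows "(\<Sum>b\<in>B. if W a b then c else 0) = real d * c"
  using assms by (simp add: sum.inter_filter[symmetric])

definition gram :: "(nat \<Rightarrow> nat \<Rightarrow> real) \<Rightarrow> nat \<Rightarrow> nat \<Rightarrow> nat \<Rightarrow> real" where
  "gram u n i j = (\<Sum>k=1..n. u i k * u j k)"

lemma gram_sym: "gram u n i j = gram u n j i"
  unfolding gram_def by (simp add: mult.commute)

lemma gram_self: "gram u n i i = (\<Sum>k=1..n. (u i k)\<^sup>2)"
  unfolding gram_def by (simp add: power2_eq_square)

lemma sum_gram_nonneg: "0 \<le> (\<Sum>x\<in>A. \<Sum>y\<in>A. gram u n x y)"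
proof -
  have "0 \<le> (\<Sum>k=1..n. (\<Sum>x\<in>A. u x k)\<^sup>2)" by (rule sum_nonneg) simp
  also have "\<dots> = (\<Sum>x\<in>A. \<Sum>y\<in>A. gram u n x y)"
    unfolding gram_def power2_eq_square sum_product
    by (subst sum.swap, rule sum.cong, simp, subst sum.swap, simp)
  finally show ?thesis .
qed

lemma gram_triangle_nonneg:
  "0 \<le> gram u n x x + gram u n a a + gram u n b b
         + 2 * gram u n x a + 2 * gram u n x b + 2 * gram u n a b"
proof -
  have "0 \<le> (\<Sum>k=1..n. (u x k + u a k + u b k)\<^sup>2)" by (rule sum_nonneg) simp
  then show ?thesis
    unfolding gram_def by (simp add: power2_eq_square algebra_simps sum.distrib sum_distrib_left)
qed

lemma regular_triangle_bound:
  fixes W :: "nat \<Rightarrow> nat \<Rightarrow> bool" and v :: "nat \<Rightarrow> nat"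
  assumes "finite B" and W_sym: "\<And>a b. W a b = W b a"
    and W_reg: "\<And>a. a \<in> B \<Longrightarrow> card {b\<in>B. W a b} = d"
    and unit: "\<And>i. i \<in> A \<union> v ` B \<Longrightarrow> gram u n i i = 1"
  shows "0 \<le> 3 * real (card A) * real d * real (card B)
     + 4 * real d * (\<Sum>x\<in>A. \<Sum>a\<in>B. gram u n x (v a))
     + 2 * real (card A) * (\<Sum>a\<in>B. \<Sum>b\<in>B. if W a b then gram u n (v a) (v b) else 0)"
proof -
  let ?G = "gram u n"
  have first: "(\<Sum>b\<in>B. if W a b then 3 + 2 * ?G x (v a) else 0) = real d * (3 + 2 * ?G x (v a))"
    if "a \<in> B" for x a
    using sum_regular_neighbours[of B W a d] \<open>finite B\<close> W_reg[OF that] by blast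
  have second: "(\<Sum>a\<in>B. \<Sum>b\<in>B. if W a b then 2 * ?G x (v b) else 0)
      = (\<Sum>b\<in>B. real d * (2 * ?G x (v b)))" for x
  proof -
    have "(\<Sum>a\<in>B. \<Sum>b\<in>B. if W a b then 2 * ?G x (v b) else 0)
        = (\<Sum>b\<in>B. \<Sum>a\<in>B. if W b a then 2 * ?G x (v b) else 0)"
      by (subst sum.swap) (simp add: W_sym)
    also have "\<dots> = (\<Sum>b\<in>B. real d * (2 * ?G x (v b)))"
      using sum_regular_neighbours[of B W _ d] \<open>finite B\<close> W_reg by (intro sum.cong) auto
    finally show ?thesis .
  qed
  have "0 \<le> (\<Sum>x\<in>A. \<Sum>a\<in>B. \<Sum>b\<in>B. if W a b then ?G x x + ?G (v a) (v a) + ?G (v b) (v b)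
             + 2 * ?G x (v a) + 2 * ?G x (v b) + 2 * ?G (v a) (v b) else 0)"
    by (intro sum_nonneg) (simp add: gram_triangle_nonneg)
  also have "\<dots> = (\<Sum>x\<in>A. \<Sum>a\<in>B. \<Sum>b\<in>B. (if W a b then 3 + 2 * ?G x (v a) else 0)
        + (if W a b then 2 * ?G x (v b) else 0) + (if W a b then 2 * ?G (v a) (v b) else 0))"
    using unit by (intro sum.cong refl) auto
  also have "\<dots> = (\<Sum>x\<in>A. \<Sum>a\<in>B. real d * (3 + 2 * ?G x (v a)))
       + (\<Sum>x\<in>A. \<Sum>b\<in>B. real d * (2 * ?G x (v b)))
       + real (card A) * (\<Sum>a\<in>B. \<Sum>b\<in>B. if W a b then 2 * ?G (v a) (v b) else 0)"
    by (simp add: sum.distrib first second)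
  also have "\<dots> = 3 * real (card A) * real d * real (card B)
     + 4 * real d * (\<Sum>x\<in>A. \<Sum>a\<in>B. ?G x (v a))
     + 2 * real (card A) * (\<Sum>a\<in>B. \<Sum>b\<in>B. if W a b then ?G (v a) (v b) else 0)"
    by (simp add: sum.distrib sum_distrib_left algebra_simps if_distrib[of "\<lambda>t. 2 * t"] cong: if_cong)
  finally show ?thesis .
qed

lemma mod_eq_if_abs_less:
  fixes x p :: int
  assumes "-p \<le> x" "x < p"
  shows "x mod p = (if 0 \<le> x then x else x + p)"
proof (cases "0 \<le> x")
  case False
  then have "x mod p = (x + p) mod p" by simp
  also have "\<dots> = x + p" using assms False by (intro mod_pos_pos_trivial) auto
  finally show ?thesis using False by simp
qed (use assms in simp)

lemma web_adj_iff:
  assumes "a \<in> {1..p}" "b \<in> {1..p}" "p = q + 2*r + 1"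
  shows "web_adj p r a b \<longleftrightarrow>
    (if a \<le> b then r+1 \<le> b-a \<and> b-a \<le> r+q else r+1 \<le> b+p-a \<and> b+p-a \<le> r+q)"
proof -
  have "(int b - int a) mod int p = (if a \<le> b then int b - int a else int b - int a + int p)"
       "(int a - int b) mod int p = (if b \<le> a then int a - int b else int a - int b + int p)"
    using assms by (subst mod_eq_if_abs_less; auto)+
  moreover have "(\<exists>s\<in>{1..r}. X = int s \<or> Y = int s) \<longleftrightarrow> (1 \<le> X \<and> X \<le> int r) \<or> (1 \<le> Y \<and> Y \<le> int r)"
    for X Y
  proof (intro iffI)
    assume "(1 \<le> X \<and> X \<le> int r) \<or> (1 \<le> Y \<and> Y \<le> int r)"
    then show "\<exists>s\<in>{1..r}. X = int s \<or> Y = int s"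
    proof (elim disjE)
      assume "1 \<le> X \<and> X \<le> int r"
      then show ?thesis by (intro bexI[of _ "nat X"]) auto
    next
      assume "1 \<le> Y \<and> Y \<le> int r"
      then show ?thesis by (intro bexI[of _ "nat Y"]) auto
    qed
  qed auto
  ultimately show ?thesis unfolding web_adj_def aw_adj_def using assms by auto
qed

lemma web_adj_sym: "web_adj p r a b = web_adj p r b a"
  unfolding web_adj_def aw_adj_def by auto

lemma card_web_neighbours:
  assumes "a \<in> {1..p}" "p = q + 2*r + 1"
  shows "card {b\<in>{1..p}. web_adj p r a b} = q"
proof -
  define f where "f t = (if a + t \<le> p then a + t else a + t - p)" for t
  have "{b\<in>{1..p}. web_adj p r a b} = f ` {r+1..r+q}"
  proof (intro set_eqI iffI)
    fix b
    assume "b \<in> {b\<in>{1..p}. web_adj p r a b}"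
    then have b: "b \<in> {1..p}" "web_adj p r a b" by auto
    show "b \<in> f ` {r+1..r+q}"
    proof (cases "a \<le> b")
      case True
      then show ?thesis using b web_adj_iff[OF assms(1) b(1) assms(2)] assms
        by (intro image_eqI[of _ _ "b - a"]) (auto simp: f_def)
    next
      case False
      then show ?thesis using b web_adj_iff[OF assms(1) b(1) assms(2)] assms
        by (intro image_eqI[of _ _ "b + p - a"]) (auto simp: f_def)
    qed
  next
    fix b
    assume "b \<in> f ` {r+1..r+q}"
    then obtain t where t: "t \<in> {r+1..r+q}" "b = f t" by auto
    then have b: "b \<in> {1..p}" using assms by (auto simp: f_def)
    then show "b \<in> {b\<in>{1..p}. web_adj p r a b}"
      using web_adj_iff[OF assms(1) b assms(2)] t assms by (auto simp: f_def split: if_splits)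
  qed
  moreover have "inj_on f {r+1..r+q}"
    unfolding inj_on_def f_def using assms by auto
  ultimately show ?thesis by (simp add: card_image)
qed

lemma cw_adj_sym: "cw_adj p q r i j = cw_adj p q r j i"
  unfolding cw_adj_def using web_adj_sym by blast

lemma sum_atLeastAtMost_add_split:
  fixes f :: "nat \<Rightarrow> 'a::comm_monoid_add"
  shows "(\<Sum>j=1..q+p. f j) = (\<Sum>j=1..q. f j) + (\<Sum>a=1..p. f (q+a))"
  using sum.ub_add_nat[of 1 q f p] sum.shift_bounds_cl_nat_ivl[of f 1 q p]
  by (simp add: add.commute)

lemma sum_cw_edges:
  fixes g :: "nat \<Rightarrow> nat \<Rightarrow> real"
  assumes n: "n = p + q" and g_sym: "\<And>i j. g i j = g j i"
  shows "(\<Sum>(i,j)\<in>edges n (cw_adj p q r). g i j) =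
    ((\<Sum>x=1..q. \<Sum>y=1..q. g x y) - (\<Sum>x=1..q. g x x) + 2 * (\<Sum>x=1..q. \<Sum>a=1..p. g x (q+a))
       + (\<Sum>a=1..p. \<Sum>b=1..p. if web_adj p r a b then g (q+a) (q+b) else 0)) / 2"
proof -
  let ?C = "\<lambda>i j. if cw_adj p q r i j then g i j else 0"
  have "(\<Sum>i=1..n. \<Sum>j=1..n. ?C i j)
      = (\<Sum>x=1..q. (\<Sum>y=1..q. ?C x y) + (\<Sum>b=1..p. ?C x (q+b)))
        + (\<Sum>a=1..p. (\<Sum>y=1..q. ?C (q+a) y) + (\<Sum>b=1..p. ?C (q+a) (q+b)))"
    unfolding n add.commute[of p q] sum_atLeastAtMost_add_split ..
  also have "\<dots> = (\<Sum>x=1..q. (\<Sum>y=1..q. if x \<noteq> y then g x y else 0) + (\<Sum>b=1..p. g x (q+b)))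
        + (\<Sum>a=1..p. (\<Sum>y=1..q. g (q+a) y) + (\<Sum>b=1..p. if web_adj p r a b then g (q+a) (q+b) else 0))"
    by (intro arg_cong2[where f="(+)"] sum.cong refl) (auto simp: cw_adj_def web_adj_def)
  also have "\<dots> = (\<Sum>x=1..q. \<Sum>y=1..q. g x y) - (\<Sum>x=1..q. g x x) + 2 * (\<Sum>x=1..q. \<Sum>a=1..p. g x (q+a))
       + (\<Sum>a=1..p. \<Sum>b=1..p. if web_adj p r a b then g (q+a) (q+b) else 0)"
  proof -
    have "(\<Sum>a=1..p. \<Sum>y=1..q. g (q+a) y) = (\<Sum>x=1..q. \<Sum>a=1..p. g x (q+a))"
      by (subst sum.swap) (simp add: g_sym)
    then show ?thesis by (simp add: sum.distrib sum_offdiag_eq)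
  qed
  finally show ?thesis
    by (subst sum_edges_eq_half_sum_adj) (auto simp: cw_adj_sym cw_adj_def g_sym)
qed

lemma cw_sdp_objective_le:
  assumes "q \<ge> 1" and p: "p = q + 2*r + 1" and n: "n = p + q"
    and unit: "\<forall>i\<in>{1..n}. (\<Sum>k=1..n. (u i k)\<^sup>2) = 1"
  shows "(\<Sum>(i,j)\<in>edges n (cw_adj p q r). - 1 * (\<Sum>k=1..n. u i k * u j k))
           \<le> real q / 2 + 3 * real p * real q / 4"
proof -
  let ?G = "gram u n"
  let ?X = "\<Sum>x=1..q. \<Sum>a=1..p. ?G x (q+a)"
  let ?Y = "\<Sum>a=1..p. \<Sum>b=1..p. if web_adj p r a b then ?G (q+a) (q+b) else 0"
  have G_unit: "?G i i = 1" if "i \<in> {1..n}" for i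
    using unit that by (simp add: gram_self)
  have "0 \<le> real q * (3 * real p * real q + 4 * ?X + 2 * ?Y)"
    using regular_triangle_bound[of "{1..p}" "web_adj p r" q "{1..q}" "(+) q" u n]
      web_adj_sym card_web_neighbours[OF _ p] G_unit n
    by (force simp: algebra_simps)
  then have web_part: "0 \<le> 3 * real p * real q + 4 * ?X + 2 * ?Y"
    using \<open>q \<ge> 1\<close> by (simp add: zero_le_mult_iff)
  have clique_part: "0 \<le> (\<Sum>x=1..q. \<Sum>y=1..q. ?G x y)"
    by (rule sum_gram_nonneg)
  have diag: "(\<Sum>x=1..q. ?G x x) = real q"
    using G_unit n by simp
  have "(\<Sum>(i,j)\<in>edges n (cw_adj p q r). - 1 * ?G i j) = - (\<Sum>(i,j)\<in>edges n (cw_adj p q r). ?G i j)"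
    by (simp add: sum_negf case_prod_beta)
  also have "\<dots> = - ((\<Sum>x=1..q. \<Sum>y=1..q. ?G x y) - real q + 2 * ?X + ?Y) / 2"
    unfolding sum_cw_edges[OF n gram_sym] diag by linarith
  also have "\<dots> \<le> real q / 2 + 3 * real p * real q / 4"
    using web_part clique_part by simp
  finally show ?thesis by (simp add: gram_def)
qed

lemma cw_cut_value:
  assumes p: "p = q + 2*r + 1" and n: "n = p + q"
  shows "(\<Sum>(i,j)\<in>edges n (cw_adj p q r). - 1 * (if i \<le> q then -1 else 1) * (if j \<le> q then -1 else 1))
           = real q * (real r + 1)"
proof -
  let ?x = "\<lambda>i. if i \<le> q then -1 else 1 :: real"
  have web_part: "(\<Sum>b=1..p. if web_adj p r a b then - 1 * ?x (q+a) * ?x (q+b) else 0) = - real q"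
    if "a \<in> {1..p}" for a
  proof -
    have "(\<Sum>b=1..p. if web_adj p r a b then - 1 * ?x (q+a) * ?x (q+b) else 0)
        = (\<Sum>b=1..p. if web_adj p r a b then - 1 else 0)"
      using that by (intro sum.cong) auto
    then show ?thesis
      using sum_regular_neighbours[of "{1..p}" "web_adj p r" a q "- 1"] card_web_neighbours[OF that p]
      by simp
  qed
  have "(\<Sum>(i,j)\<in>edges n (cw_adj p q r). - 1 * ?x i * ?x j)
      = (- real q * real q + real q + 2 * (real q * real p) - real p * real q) / 2"
    using sum_cw_edges[OF n, of "\<lambda>i j. - 1 * ?x i * ?x j"] web_part by simp
  also have "\<dots> = real q * (real r + 1)"
    using p by (simp add: algebra_simps)
  finally show ?thesis .
qed

theorem mainTheorem11:
  fixes p q r n :: nat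
  assumes "q \<ge> 2" and "p = q + 2 * r + 1" and "n = p + q" and "q \<le> 2 * r"
  shows "sdp n (cw_adj p q r) (\<lambda>i j. -1) / ip n (cw_adj p q r) (\<lambda>i j. -1) \<le> 3"
proof -
  have ip_ge: "real q * (real r + 1) \<le> ip n (cw_adj p q r) (\<lambda>i j. -1)"
    using ip_geI[where n=n and x="\<lambda>i. if i \<le> q then -1 else 1" and E="cw_adj p q r" and w="\<lambda>i j. -1"]
      cw_cut_value[OF assms(2,3)]
    by simp
  have sdp_le: "sdp n (cw_adj p q r) (\<lambda>i j. -1) \<le> real q / 2 + 3 * real p * real q / 4"
    using assms by (intro sdp_leI cw_sdp_objective_le) auto
  have "real (2 + 3 * p) * real q \<le> real (12 * (r + 1)) * real q"
    using assms(2,4) by (intro mult_right_mono) simp_all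
  then have "real q / 2 + 3 * real p * real q / 4 \<le> 3 * (real q * (real r + 1))"
    by (simp add: algebra_simps)
  moreover have "0 < real q * (real r + 1)"
    using assms(1) by simp
  ultimately show ?thesis
    using ip_ge sdp_le by (simp add: divide_le_eq)
qed

end
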